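(* Consider each of the following smooth families of functions $F_{\mathbf c,\mathbf s}:\mathbb{R}^2\to\mathbb{R}$ of $\mathbf x=(x,y)$, with parameters $\mathbf c$ (possibly absent) and $\mathbf s=(s_1,s_2)$, together with the induced family of maps $\mathbf f_{\mathbf c}:\mathbb{R}^2\to\mathbb{R}^2$ between planes, and the associated number $N$: (1) Fold ($A_2$), $N=2$: $F_{\mathbf s}=-s_1x+s_2y+\tfrac12x^2-\tfrac13y^3$, $\mathbf f(x,y)=(x,\,y^2)$. (2) Cusp ($A_3$), $N=3$: $F_{\mathbf s}=-s_1x+s_2y+\tfrac12x^2-\tfrac12s_1y^2-\tfrac14y^4$, $\mathbf f(x,y)=(x,\,xy+y^3)$. (3) Swallowtail ($A_4$), $N=4$: $F_{c,\mathbf s}=s_1x-s_2y-\tfrac12s_2x^2+\tfrac12y^2-\tfrac13cx^3-\tfrac15x^5$, $\mathbf f_c(x,y)=(xy+cx^2+x^4,\,y)$. (4) Elliptic umbilic ($D_4^-$), $N=4$: $F_{c,\mathbf s}=s_1x+s_2y+c(x^2+y^2)+x^3-3xy^2$, $\mathbf f_c(x,y)=(3y^2-3x^2-2cx,\,6xy-2cy)$. (5) Hyperbolic umbilic ($D_4^+$), $N=4$: $F_{c,\mathbf s}=s_1x+s_2y+cxy+x^3+y^3$, $\mathbf f_c(x,y)=(-3x^2-cy,\,-3y^2-cx)$. (6) Butterfly ($A_5$), $N=5$: $F_{\mathbf c,\mathbf s}=x^6+c_1x^4+c_2x^3+s_2x^2+s_1x+\tfrac12y^2-s_2y$, $\mathbf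 f_{\mathbf c}(x,y)=(-2xy-3c_2x^2-4c_1x^3-6x^5,\,y)$. (7) Parabolic umbilic ($D_5$), $N=5$: $F_{\mathbf c,\mathbf s}=x^2y+y^4+c_1x^2+c_2y^2-s_1x-s_2y$, $\mathbf f_{\mathbf c}(x,y)=(2c_1x+2xy,\,2c_2y+x^2+4y^3)$. (8) Wigwam ($A_6$), $N=6$: $F_{\mathbf c,\mathbf s}=x^7+c_1x^5+c_2x^4+c_3x^3+s_2x^2+s_1x+\tfrac12y^2-s_2y$, $\mathbf f_{\mathbf c}(x,y)=(-2xy-3c_3x^2-4c_2x^3-5c_1x^4-7x^6,\,y)$. (9) Symbolic umbilic ($E_6$), $N=6$: $F_{\mathbf c,\mathbf s}=x^3+y^4+c_1xy^2+c_2xy+c_3y^2+s_2y+s_1x$, $\mathbf f_{\mathbf c}(x,y)=(-3x^2-c_1y^2-c_2y,\,-4y^3-2c_1xy-c_2x-2c_3y)$. (10) $2^{\rm nd}$ elliptic umbilic ($D_6^-$), $N=6$: $F_{\mathbf c,\mathbf s}=x^2y-y^5+c_1y^4+c_2y^3+c_3y^2+s_2y+s_1x$, $\mathbf f_{\mathbf c}(x,y)=(-2xy,\,-x^2+5y^4-4c_1y^3-3c_2y^2-2c_3y)$. (11) $2^{\rm nd}$ hyperbolic umbilic ($D_6^+$), $N=6$: $F_{\mathbf c,\mathbf s}=x^2y+y^5+c_1y^4+c_2y^3+c_3y^2+s_2y+s_1x$, $\mathbf f_{\mathbf c}(x,y)=(-2xy,\,-x^2-5y^4-4c_1y^3-3c_2y^2-2c_3y)$.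 For any of these families, any parameter value $\mathbf c$, and any non-caustic point $\mathbf s$ lying in the region of the target plane giving rise to the maximum number $N$ of real pre-images $\mathbf x_1,\dots,\mathbf x_N$ (i.e. critical points of $F_{\mathbf c,\mathbf s}$), the magnifications $\mathfrak M_i=\mathfrak M(\mathbf x_i;\mathbf s)$ satisfy $$\sum_{i=1}^{N}\mathfrak M_i=0.$$
   Context: For each family, a critical point $\mathbf x_0$ of $F_{\mathbf c,\mathbf s}$ (i.e. $\operatorname{grad}F_{\mathbf c,\mathbf s}(\mathbf x_0)=\mathbf 0$) is the same as a pre-image of $\mathbf s$ under $\mathbf f_{\mathbf c}$, i.e. $\mathbf f_{\mathbf c}(\mathbf x_0)=\mathbf s$. The magnification at such a point is $\mathfrak M(\mathbf x_0;\mathbf s)=1/\mathrm{Gauss}(\mathbf x_0,F_{\mathbf c,\mathbf s}(\mathbf x_0))$, the reciprocal of the Gaussian curvature of the graph of $F_{\mathbf c,\mathbf s}$ at that point; this equals $1/\det(\operatorname{Hess}F_{\mathbf c,\mathbf s})(\mathbf x_0)=1/\det(\operatorname{Jac}\mathbf f_{\mathbf c})(\mathbf x_0)$. A caustic point is a target point $\mathbf s$ that is the image under $\mathbf f_{\mathbf c}$ of a point where $\det(\operatorname{Jac}\mathbf f_{\mathbf c})=0$; a non-caustic point is one that is not caustic, so all its magnifications are finite. *)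

theory Defs
  imports "HOL-Analysis.Analysis"
begin

text \<open>The parameter vector c = (c1, c2, c3) is a triple; families with fewer parameters
  simply ignore the unused components (a scalar parameter c is c1).\<close>

datatype catastrophe =
    Fold | Cusp | Swallowtail | EllipticUmbilic | HyperbolicUmbilic | Butterfly
  | ParabolicUmbilic | Wigwam | SymbolicUmbilic | EllipticUmbilic2 | HyperbolicUmbilic2

definition vec2 :: "real \<Rightarrow> real \<Rightarrow> real^2" where
  "vec2 a b = (\<chi> i. if i = 1 then a else b)"

fun lens_map :: "catastrophe \<Rightarrow> real \<times> real \<times> real \<Rightarrow> real^2 \<Rightarrow> real^2" where
  "lens_map Fold (c1, c2, c3) p = vec2 (p$1) ((p$2)^2)"
| "lens_map Cusp (c1, c2, c3) p = vec2 (p$1) (p$1 * p$2 + (p$2)^3)"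
| "lens_map Swallowtail (c1, c2, c3) p =
     vec2 (p$1 * p$2 + c1 * (p$1)^2 + (p$1)^4) (p$2)"
| "lens_map EllipticUmbilic (c1, c2, c3) p =
     vec2 (3 * (p$2)^2 - 3 * (p$1)^2 - 2 * c1 * p$1) (6 * p$1 * p$2 - 2 * c1 * p$2)"
| "lens_map HyperbolicUmbilic (c1, c2, c3) p =
     vec2 (- 3 * (p$1)^2 - c1 * p$2) (- 3 * (p$2)^2 - c1 * p$1)"
| "lens_map Butterfly (c1, c2, c3) p =
     vec2 (- 2 * p$1 * p$2 - 3 * c2 * (p$1)^2 - 4 * c1 * (p$1)^3 - 6 * (p$1)^5) (p$2)"
| "lens_map ParabolicUmbilic (c1, c2, c3) p =
     vec2 (2 * c1 * p$1 + 2 * p$1 * p$2) (2 * c2 * p$2 + (p$1)^2 + 4 * (p$2)^3)"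
| "lens_map Wigwam (c1, c2, c3) p =
     vec2 (- 2 * p$1 * p$2 - 3 * c3 * (p$1)^2 - 4 * c2 * (p$1)^3 - 5 * c1 * (p$1)^4
           - 7 * (p$1)^6) (p$2)"
| "lens_map SymbolicUmbilic (c1, c2, c3) p =
     vec2 (- 3 * (p$1)^2 - c1 * (p$2)^2 - c2 * p$2)
          (- 4 * (p$2)^3 - 2 * c1 * p$1 * p$2 - c2 * p$1 - 2 * c3 * p$2)"
| "lens_map EllipticUmbilic2 (c1, c2, c3) p =
     vec2 (- 2 * p$1 * p$2)
          (- ((p$1)^2) + 5 * (p$2)^4 - 4 * c1 * (p$2)^3 - 3 * c2 * (p$2)^2 - 2 * c3 * p$2)"
| "lens_map HyperbolicUmbilic2 (c1, c2, c3) p =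
     vec2 (- 2 * p$1 * p$2)
          (- ((p$1)^2) - 5 * (p$2)^4 - 4 * c1 * (p$2)^3 - 3 * c2 * (p$2)^2 - 2 * c3 * p$2)"

fun max_images :: "catastrophe \<Rightarrow> nat" where
  "max_images Fold = 2"
| "max_images Cusp = 3"
| "max_images Swallowtail = 4"
| "max_images EllipticUmbilic = 4"
| "max_images HyperbolicUmbilic = 4"
| "max_images Butterfly = 5"
| "max_images ParabolicUmbilic = 5"
| "max_images Wigwam = 6"
| "max_images SymbolicUmbilic = 6"
| "max_images EllipticUmbilic2 = 6"
| "max_images HyperbolicUmbilic2 = 6"

definition magnification :: "catastrophe \<Rightarrow> real \<times> real \<times> real \<Rightarrow> real^2 \<Rightarrow> real" where
  "magnification k c p = 1 / det (jacobian (lens_map k c) (at p))"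

definition caustic :: "catastrophe \<Rightarrow> real \<times> real \<times> real \<Rightarrow> real^2 \<Rightarrow> bool" where
  "caustic k c s \<longleftrightarrow> (\<exists>p. lens_map k c p = s \<and> det (jacobian (lens_map k c) (at p)) = 0)"

end

theory Submission
  imports Defs "HOL-Computational_Algebra.Polynomial" "HOL-Library.Disjoint_Sets"
begin

text \<open>
  Projecting the pre-images of \<open>s\<close> to a suitable coordinate identifies them with the \<open>N\<close> simple
  real roots of an elimination polynomial \<open>Q\<close> of degree \<open>N\<close>, and the Jacobian determinant at a
  pre-image with root \<open>r\<close> equals \<open>Q'(r) / B(r)\<close> for a polynomial \<open>B\<close> of degree at most \<open>N - 2\<close>.
  By Lagrange interpolation, \<open>\<Sum>\<^sub>r B(r) / Q'(r)\<close> is the coefficient of \<open>x^(N - 1)\<close> in \<open>B\<close>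
  divided by the leading coefficient of \<open>Q\<close>, hence zero.

  For special parameter values the projection is not injective. Then either a reflection of the
  plane preserves the map and reverses the sign of the Jacobian, or the pre-images split into the
  roots of a polynomial \<open>g\<close> of degree \<open>N - 2\<close>, whose reciprocal Jacobians add up to \<open>1 / (K g(a))\<close>
  by the partial fraction expansion of \<open>1 / g\<close>, and a pair of points whose contributions cancel
  this term.
\<close>

section \<open>Sums over the roots of a polynomial\<close>

lemma degree_prod_linear_factors:
  "degree (\<Prod>a\<in>A. [:-a, 1:] :: 'a::field poly) = card A"
  by (cases "finite A") (simp_all add: degree_prod_sum_eq)

lemma lead_coeff_prod_linear_factors:
  "lead_coeff (\<Prod>a\<in>A. [:-a, 1:] :: 'a::field poly) = 1"
  by (simp add: lead_coeff_prod)

lemma poly_prod_linear_factors: "poly (\<Prod>a\<in>A. [:-a, 1:]) x = (\<Prod>a\<in>A. x - a :: 'a::comm_ring_1)"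
  by (simp add: poly_prod)

lemma poly_eq_smult_prod_roots:
  fixes Q :: "'a::field poly"
  assumes "finite R" "card R = degree Q" "\<And>r. r \<in> R \<Longrightarrow> poly Q r = 0"
  shows "Q = smult (lead_coeff Q) (\<Prod>r\<in>R. [:-r, 1:])"
proof (rule poly_eqI_degree_lead_coeff[of _ "degree Q" _ R])
  have "coeff (\<Prod>r\<in>R. [:-r, 1:]) (degree Q) = 1"
    using lead_coeff_prod_linear_factors[of R] by (simp add: degree_prod_linear_factors assms(2))
  then show "coeff Q (degree Q) = coeff (smult (lead_coeff Q) (\<Prod>r\<in>R. [:- r, 1:])) (degree Q)"
    by simp
next
  show "\<And>z. z \<in> R \<Longrightarrow> poly Q z = poly (smult (lead_coeff Q) (\<Prod>r\<in>R. [:- r, 1:])) z"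
    using assms by (simp add: poly_prod_linear_factors prod_zero_iff)
qed (use assms in \<open>simp_all add: degree_prod_linear_factors lead_coeff_prod_linear_factors\<close>)

lemma poly_pderiv_at_root:
  fixes Q :: "'a::field poly"
  assumes "finite R" "card R = degree Q" "\<And>r. r \<in> R \<Longrightarrow> poly Q r = 0" "r \<in> R"
  shows "poly (pderiv Q) r = lead_coeff Q * (\<Prod>r'\<in>R - {r}. r - r')"
proof -
  have "pderiv Q = smult (lead_coeff Q) (pderiv (\<Prod>r\<in>R. [:-r, 1:]))"
    by (subst poly_eq_smult_prod_roots[OF assms(1-3)]) (simp_all add: pderiv_smult)
  then have "poly (pderiv Q) r = lead_coeff Q * poly (pderiv (\<Prod>r\<in>R. [:-r, 1:])) r"
    by simp
  also have "poly (pderiv (\<Prod>r\<in>R. [:-r, 1:])) r = (\<Sum>a\<in>R. \<Prod>b\<in>R - {a}. r - b)"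
    by (simp add: pderiv_prod poly_sum poly_prod pderiv_pCons)
  also have "(\<Sum>a\<in>R. \<Prod>b\<in>R - {a}. r - b) = (\<Prod>b\<in>R - {r}. r - b)"
    using assms(1,4) by (subst sum.remove[of _ r]) (auto simp: prod_zero_iff intro!: sum.neutral)
  finally show ?thesis .
qed

lemma sum_div_prod_differences_eq_coeff:
  fixes B :: "'a::field poly"
  assumes "finite R" "card R = Suc m" "degree B \<le> m"
  shows "(\<Sum>r\<in>R. poly B r / (\<Prod>r'\<in>R - {r}. r - r')) = coeff B m"
proof -
  define d where "d r = (\<Prod>r'\<in>R - {r}. r - r')" for r
  define P where "P r = (\<Prod>r'\<in>R - {r}. [:-r', 1:])" for r
  define L where "L = (\<Sum>r\<in>R. smult (poly B r / d r) (P r))"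
  have d_nonzero: "d r \<noteq> 0" if "r \<in> R" for r
    using assms(1) by (simp add: d_def prod_zero_iff)
  have deg_P: "degree (P r) = m" and coeff_P: "coeff (P r) m = 1" if "r \<in> R" for r
    using that assms(1,2) degree_prod_linear_factors[of "R - {r}"]
      lead_coeff_prod_linear_factors[of "R - {r}"] by (simp_all add: P_def)
  have poly_P: "poly (P r) x = (if x \<in> R - {r} then 0 else (\<Prod>r'\<in>R - {r}. x - r'))" for r x
    using assms(1) by (simp add: P_def poly_prod_linear_factors prod_zero_iff)
  have "poly L x = poly B x" if "x \<in> R" for x
  proof -
    have "poly L x = (\<Sum>r\<in>R. poly B r / d r * poly (P r) x)"
      by (simp add: L_def poly_sum)
    also have "\<dots> = poly B x / d x * poly (P x) x"
      using assms(1) that by (subst sum.mono_neutral_right[of R "{x}"]) (auto simp: poly_P)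
    finally show ?thesis
      using d_nonzero[OF that] by (simp add: poly_P d_def)
  qed
  moreover have "degree L \<le> m"
    unfolding L_def using assms(1) by (intro degree_sum_le) (auto intro: order.trans[OF degree_smult_le] simp: deg_P)
  ultimately have "L = B"
    using assms(2,3) by (intro poly_eqI_degree[of R]) auto
  then have "coeff B m = coeff L m"
    by simp
  also have "\<dots> = (\<Sum>r\<in>R. poly B r / d r * coeff (P r) m)"
    by (simp add: L_def coeff_sum)
  also have "\<dots> = (\<Sum>r\<in>R. poly B r / d r)"
    by (simp add: coeff_P)
  finally show ?thesis
    by (simp add: d_def)
qed

lemma sum_poly_div_pderiv_roots_eq_0:
  fixes Q B :: "'a::field poly"
  assumes "finite R" "card R = degree Q" "\<And>r. r \<in> R \<Longrightarrow> poly Q r = 0"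
    and "degree B + 2 \<le> degree Q"
  shows "(\<Sum>r\<in>R. poly B r / poly (pderiv Q) r) = 0"
proof -
  have "(\<Sum>r\<in>R. poly B r / poly (pderiv Q) r)
      = (\<Sum>r\<in>R. poly B r / (\<Prod>r'\<in>R - {r}. r - r')) / lead_coeff Q"
    by (simp add: poly_pderiv_at_root[OF assms(1-3)] sum_divide_distrib field_simps)
  also have "(\<Sum>r\<in>R. poly B r / (\<Prod>r'\<in>R - {r}. r - r')) = coeff B (degree Q - 1)"
    using assms by (intro sum_div_prod_differences_eq_coeff) auto
  also have "\<dots> = 0"
    using assms(4) by (intro coeff_eq_0) simp
  finally show ?thesis by simp
qed

lemma sum_inverse_pderiv_roots:
  fixes g :: "'a::field poly"
  assumes "finite R" "card R = degree g" "\<And>r. r \<in> R \<Longrightarrow> poly g r = 0"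
    and "degree g \<ge> 1" "poly g a \<noteq> 0"
  shows "(\<Sum>r\<in>R. 1 / ((a - r) * poly (pderiv g) r)) = 1 / poly g a"
proof -
  define P where "P = [:-a, 1:] * g"
  have a_notin: "a \<notin> R" using assms(3,5) by blast
  have deg_P: "degree P = degree g + 1"
    using assms(4) unfolding P_def by (subst degree_mult_eq) auto
  have pderiv_P: "poly (pderiv P) x = poly g x + (x - a) * poly (pderiv g) x" for x
    unfolding P_def pderiv_mult by (simp add: pderiv_pCons algebra_simps)
  have "(\<Sum>r\<in>insert a R. poly 1 r / poly (pderiv P) r) = 0"
    using assms a_notin deg_P
    by (intro sum_poly_div_pderiv_roots_eq_0) (auto simp: P_def)
  moreover have "(\<Sum>r\<in>insert a R. poly 1 r / poly (pderiv P) r)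
      = 1 / poly g a + (\<Sum>r\<in>R. 1 / ((r - a) * poly (pderiv g) r))"
    using assms(1,3) a_notin by (simp add: pderiv_P)
  moreover have "1 / ((a - r) * y) = - (1 / ((r - a) * y))" for r y :: 'a
    by (metis minus_diff_eq mult_minus_left divide_minus_right)
  then have "(\<Sum>r\<in>R. 1 / ((a - r) * poly (pderiv g) r)) = - (\<Sum>r\<in>R. 1 / ((r - a) * poly (pderiv g) r))"
    by (simp add: sum_negf)
  ultimately show ?thesis
    by (simp add: add_eq_0_iff)
qed

lemma card_le_degree_of_inj_on_roots:
  fixes g :: "'b::idom poly"
  assumes "inj_on \<pi> A" "\<And>p. p \<in> A \<Longrightarrow> poly g (\<pi> p) = 0" "g \<noteq> 0"
  shows "card A \<le> degree g"
proof -
  have "card A = card (\<pi> ` A)"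
    using assms(1) by (simp add: card_image)
  also have "\<dots> \<le> card {x. poly g x = 0}"
    using assms(2,3) by (intro card_mono poly_roots_finite) auto
  also have "\<dots> \<le> degree g"
    using assms(3) by (rule card_poly_roots_bound)
  finally show ?thesis .
qed

lemma card_eq_of_card_partition_le:
  assumes "finite S" "card S = m + n" "card {p\<in>S. P p} \<le> m" "card {p\<in>S. \<not> P p} \<le> n"
  shows "card {p\<in>S. P p} = m" "card {p\<in>S. \<not> P p} = n"
proof -
  have "card S = card {p\<in>S. P p} + card {p\<in>S. \<not> P p}"
    using assms(1) by (subst card_Un_disjoint[symmetric]) (auto intro: arg_cong[where f=card])
  then show "card {p\<in>S. P p} = m" "card {p\<in>S. \<not> P p} = n"
    using assms(2-4) by linarith+
qed

lemma sum_inverse_eq_0_of_elimination: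
  fixes \<pi> :: "'a \<Rightarrow> 'b::field" and J :: "'a \<Rightarrow> 'b" and Q B :: "'b poly"
  assumes "card S = degree Q" "degree B + 2 \<le> degree Q" "inj_on \<pi> S"
    and "\<And>p. p \<in> S \<Longrightarrow> poly Q (\<pi> p) = 0"
    and "\<And>p. p \<in> S \<Longrightarrow> J p * poly B (\<pi> p) = poly (pderiv Q) (\<pi> p)"
  shows "(\<Sum>p\<in>S. 1 / J p) = 0"
proof -
  have "finite S"
    using assms(1,2) card.infinite by fastforce
  then have roots: "finite (\<pi> ` S)" "card (\<pi> ` S) = degree Q" "\<And>r. r \<in> \<pi> ` S \<Longrightarrow> poly Q r = 0"
    using assms(1,3,4) by (auto simp: card_image)
  have "1 / J p = poly B (\<pi> p) / poly (pderiv Q) (\<pi> p)" if "p \<in> S" for p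
  proof -
    have "Q \<noteq> 0" using assms(2) by auto
    then have "J p * poly B (\<pi> p) \<noteq> 0"
      using roots(1) that by (simp add: assms(5) poly_pderiv_at_root[OF roots] prod_zero_iff)
    then show ?thesis
      by (simp add: assms(5)[OF that, symmetric])
  qed
  then have "(\<Sum>p\<in>S. 1 / J p) = (\<Sum>r\<in>\<pi> ` S. poly B r / poly (pderiv Q) r)"
    using assms(3) by (simp add: sum.reindex)
  also have "\<dots> = 0"
    using roots assms(2) by (rule sum_poly_div_pderiv_roots_eq_0)
  finally show ?thesis .
qed

lemma sum_inverse_split_of_partial_fractions:
  fixes \<pi> :: "'a \<Rightarrow> 'b::field" and J :: "'a \<Rightarrow> 'b" and g :: "'b poly"
  assumes "finite S" "A \<subseteq> S" "card A = degree g" "degree g \<ge> 1" "inj_on \<pi> A"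
    and "\<And>p. p \<in> A \<Longrightarrow> poly g (\<pi> p) = 0" "poly g a \<noteq> 0"
    and "\<And>p. p \<in> A \<Longrightarrow> J p = K * (a - \<pi> p) * poly (pderiv g) (\<pi> p)"
  shows "(\<Sum>p\<in>S. 1 / J p) = 1 / (K * poly g a) + (\<Sum>p\<in>S - A. 1 / J p)"
proof -
  have roots: "finite (\<pi> ` A)" "card (\<pi> ` A) = degree g" "\<And>r. r \<in> \<pi> ` A \<Longrightarrow> poly g r = 0"
    using assms(1-3,5,6) by (auto simp: card_image intro: finite_subset)
  have "(\<Sum>p\<in>A. 1 / J p) = 1 / K * (\<Sum>r\<in>\<pi> ` A. 1 / ((a - r) * poly (pderiv g) r))"
    using assms(5,8) by (simp add: sum.reindex sum_distrib_left mult.assoc)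
  also have "\<dots> = 1 / (K * poly g a)"
    using roots assms(4,7) by (simp add: sum_inverse_pderiv_roots)
  finally show ?thesis
    using assms(1,2) by (simp add: sum.subset_diff)
qed

section \<open>Jacobians of the lensing maps\<close>

lemma vec2_nth [simp]: "vec2 a b $ 1 = a" "vec2 a b $ 2 = b"
  by (simp_all add: vec2_def)

lemma vec2_eta: "(f :: 'a \<Rightarrow> real^2) = (\<lambda>x. vec2 (f x $ 1) (f x $ 2))"
  by (auto simp: vec2_def vec_eq_iff forall_2)

lemma vector_2_eq_iff: "(p :: real^2) = q \<longleftrightarrow> p$1 = q$1 \<and> p$2 = q$2"
  by (auto simp: vec_eq_iff forall_2)

lemma inj_on_vector_2_component:
  fixes S :: "(real^2) set"
  assumes "i \<noteq> j" "\<And>p. p \<in> S \<Longrightarrow> a (p$i) * p$j = b (p$i)" "\<And>p. p \<in> S \<Longrightarrow> a (p$i) \<noteq> 0"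
  shows "inj_on (\<lambda>p. p$i) S"
proof (rule inj_onI)
  fix p q assume "p \<in> S" "q \<in> S" "p$i = q$i"
  then have "a (p$i) * p$j = a (p$i) * q$j"
    using assms(2)[of p] assms(2)[of q] by simp
  then have "p$j = q$j"
    using assms(3)[OF \<open>p \<in> S\<close>] by simp
  moreover have "(i = 1 \<and> j = 2) \<or> (i = 2 \<and> j = 1)"
    using assms(1) exhaust_2[of i] exhaust_2[of j] by auto
  ultimately show "p = q"
    using \<open>p$i = q$i\<close> by (auto simp: vector_2_eq_iff)
qed

lemma has_derivative_vec2 [derivative_intros]:
  assumes "(F has_derivative F') net" "(G has_derivative G') net"
  shows "((\<lambda>x. vec2 (F x) (G x)) has_derivative (\<lambda>h. vec2 (F' h) (G' h))) net"
proof -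
  have "vec2 a b = a *\<^sub>R axis 1 1 + b *\<^sub>R axis 2 1" for a b
    by (simp add: vec2_def vec_eq_iff forall_2 axis_def)
  then show ?thesis
    by (simp only:) (intro derivative_intros assms)
qed

lemma has_derivative_vec_nth_2 [derivative_intros]:
  "((\<lambda>x::real^2. x $ i) has_derivative (\<lambda>h. h $ i)) net"
  by (intro bounded_linear_imp_has_derivative bounded_linear_vec_nth)

lemma det_jacobian_2:
  fixes f :: "real^2 \<Rightarrow> real^2"
  assumes "(f has_derivative f') (at p)"
  shows "det (jacobian f (at p)) = f' (axis 1 1) $ 1 * f' (axis 2 1) $ 2 - f' (axis 2 1) $ 1 * f' (axis 1 1) $ 2"
  using frechet_derivative_at[OF assms] by (simp add: jacobian_def matrix_def det_2)

fun lens_det :: "catastrophe \<Rightarrow> real \<times> real \<times> real \<Rightarrow> real^2 \<Rightarrow> real" where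
  "lens_det Fold _ p = 2 * p$2"
| "lens_det Cusp _ p = p$1 + 3 * (p$2)^2"
| "lens_det Swallowtail (c1, _, _) p = p$2 + 2 * c1 * p$1 + 4 * (p$1)^3"
| "lens_det EllipticUmbilic (c1, _, _) p = 4 * c1^2 - 36 * ((p$1)^2 + (p$2)^2)"
| "lens_det HyperbolicUmbilic (c1, _, _) p = 36 * p$1 * p$2 - c1^2"
| "lens_det Butterfly (c1, c2, _) p = - 2 * p$2 - 6 * c2 * p$1 - 12 * c1 * (p$1)^2 - 30 * (p$1)^4"
| "lens_det ParabolicUmbilic (c1, c2, _) p = 4 * (c1 + p$2) * (c2 + 6 * (p$2)^2) - 4 * (p$1)^2"
| "lens_det Wigwam (c1, c2, c3) p =
     - 2 * p$2 - 6 * c3 * p$1 - 12 * c2 * (p$1)^2 - 20 * c1 * (p$1)^3 - 42 * (p$1)^5"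
| "lens_det SymbolicUmbilic (c1, c2, c3) p =
     12 * p$1 * (6 * (p$2)^2 + c1 * p$1 + c3) - (2 * c1 * p$2 + c2)^2"
| "lens_det EllipticUmbilic2 (c1, c2, c3) p =
     - 4 * p$2 * (10 * (p$2)^3 - 6 * c1 * (p$2)^2 - 3 * c2 * p$2 - c3) - 4 * (p$1)^2"
| "lens_det HyperbolicUmbilic2 (c1, c2, c3) p =
     4 * p$2 * (10 * (p$2)^3 + 6 * c1 * (p$2)^2 + 3 * c2 * p$2 + c3) - 4 * (p$1)^2"

lemma det_jacobian_lens_map:
  "det (jacobian (lens_map k c) (at p)) = lens_det k c p"
  by (cases c, induct k; subst vec2_eta; rule trans[OF det_jacobian_2],
      simp only: lens_map.simps vec2_nth, (rule derivative_intros)+,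
      simp add: axis_def algebra_simps power2_eq_square power3_eq_cube power4_eq_xxxx)

\<comment> \<open>Oriented so that the simplifier substitutes the components of \<open>s\<close>.\<close>
lemma lens_map_eq_iff:
  "lens_map k c p = s \<longleftrightarrow> s$1 = lens_map k c p $ 1 \<and> s$2 = lens_map k c p $ 2"
  by (auto simp: vector_2_eq_iff)

lemma magnification_eq: "magnification k c p = 1 / lens_det k c p"
  by (simp add: magnification_def det_jacobian_lens_map)

lemma caustic_iff: "caustic k c s \<longleftrightarrow> (\<exists>p. lens_map k c p = s \<and> lens_det k c p = 0)"
  by (simp add: caustic_def det_jacobian_lens_map)

section \<open>Sums of magnifications\<close>

lemma sum_magnification_eq_0_of_elimination:
  fixes \<pi> :: "real^2 \<Rightarrow> real" and Q :: "real^2 \<Rightarrow> real poly"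
  assumes "card {p. lens_map k c p = s} = n" "degree (Q s) = n" "degree B + 2 \<le> n"
    and "inj_on \<pi> {p. lens_map k c p = s}"
    and "\<And>p. poly (Q (lens_map k c p)) (\<pi> p) = 0"
    and "\<And>p. lens_det k c p * poly B (\<pi> p) = poly (pderiv (Q (lens_map k c p))) (\<pi> p)"
  shows "(\<Sum>p\<in>{p. lens_map k c p = s}. magnification k c p) = 0"
  unfolding magnification_eq using assms
  by (intro sum_inverse_eq_0_of_elimination[where Q = "Q s"]) auto

lemma sum_magnification_eq_0_of_reflection:
  assumes "\<not> caustic k c s" "\<And>p. \<sigma> (\<sigma> p) = p" "\<And>p. lens_map k c (\<sigma> p) = lens_map k c p"
    and "\<And>p. lens_det k c (\<sigma> p) = - lens_det k c p"
  shows "(\<Sum>p\<in>{p. lens_map k c p = s}. magnification k c p) = 0"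
proof (rule sum_involution_eq_0[where h = \<sigma>])
  show "\<sigma> p \<noteq> p" if "p \<in> {p. lens_map k c p = s}" for p
    using assms(1) assms(4)[of p] that by (auto simp: caustic_iff)
qed (use assms in \<open>auto simp: magnification_eq\<close>)

lemma sum_magnification_eq_0_of_partial_fractions:
  fixes \<pi> \<rho> :: "real^2 \<Rightarrow> real" and g h :: "real poly"
  assumes "card {p. lens_map k c p = s} = degree g + 2" "degree g \<ge> 1" "degree h = 2"
    and "inj_on \<pi> {p. lens_map k c p = s \<and> P p}"
    and "\<And>p. lens_map k c p = s \<Longrightarrow> P p \<Longrightarrow> poly g (\<pi> p) = 0"
    and "\<And>p. lens_map k c p = s \<Longrightarrow> P p \<Longrightarrow> lens_det k c p = K * (a - \<pi> p) * poly (pderiv g) (\<pi> p)"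
    and "inj_on \<rho> {p. lens_map k c p = s \<and> \<not> P p}"
    and "\<And>p. lens_map k c p = s \<Longrightarrow> \<not> P p \<Longrightarrow> poly h (\<rho> p) = 0"
    and "\<And>p q. lens_map k c p = s \<Longrightarrow> \<not> P p \<Longrightarrow> lens_map k c q = s \<Longrightarrow> \<not> P q \<Longrightarrow> p \<noteq> q \<Longrightarrow>
           K * poly g a * (1 / lens_det k c p + 1 / lens_det k c q) = -1"
  shows "(\<Sum>p\<in>{p. lens_map k c p = s}. magnification k c p) = 0"
proof -
  define S where "S = {p. lens_map k c p = s}"
  define A where "A = {p. lens_map k c p = s \<and> P p}"
  define B where "B = {p. lens_map k c p = s \<and> \<not> P p}"
  have "finite S"
    using assms(1) card.infinite unfolding S_def by fastforce
  moreover have "card A \<le> degree g" "card B \<le> degree h"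
    using assms(2-5,7,8) unfolding A_def B_def by (intro card_le_degree_of_inj_on_roots; auto)+
  ultimately have card_A: "card A = degree g" and "card B = 2"
    using card_eq_of_card_partition_le[of S "degree g" 2 P] assms(1,3)
    unfolding S_def A_def B_def by auto
  then obtain b b' where B: "B = {b, b'}" "b \<noteq> b'"
    by (meson card_2_iff)
  then have pair: "K * poly g a * (1 / lens_det k c b + 1 / lens_det k c b') = -1"
    using assms(9) unfolding B_def by blast
  then have "K * poly g a \<noteq> 0"
    by auto
  have "(\<Sum>p\<in>S. 1 / lens_det k c p) = 1 / (K * poly g a) + (\<Sum>p\<in>S - A. 1 / lens_det k c p)"
    using \<open>finite S\<close> card_A assms(2,4-6) \<open>K * poly g a \<noteq> 0\<close> unfolding S_def A_def
    by (intro sum_inverse_split_of_partial_fractions) auto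
  also have "S - A = {b, b'}"
    unfolding S_def A_def B(1)[symmetric] B_def by blast
  finally show ?thesis
    using pair B(2) \<open>K * poly g a \<noteq> 0\<close> by (simp add: magnification_eq S_def field_simps)
qed

lemma sum_magnification_eq_0_of_partial_fractions_constant:
  fixes \<pi> \<rho> :: "real^2 \<Rightarrow> real" and g h :: "real poly"
  assumes "\<not> caustic k c s"
    and "card {p. lens_map k c p = s} = degree g + 2" "degree g \<ge> 1" "degree h = 2"
    and "inj_on \<pi> {p. lens_map k c p = s \<and> P p}"
    and "\<And>p. lens_map k c p = s \<Longrightarrow> P p \<Longrightarrow> poly g (\<pi> p) = 0"
    and "\<And>p. lens_map k c p = s \<Longrightarrow> P p \<Longrightarrow> lens_det k c p = K * (a - \<pi> p) * poly (pderiv g) (\<pi> p)"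
    and "inj_on \<rho> {p. lens_map k c p = s \<and> \<not> P p}"
    and "\<And>p. lens_map k c p = s \<Longrightarrow> \<not> P p \<Longrightarrow> poly h (\<rho> p) = 0"
    and "\<And>p. lens_map k c p = s \<Longrightarrow> \<not> P p \<Longrightarrow> lens_det k c p = - 2 * K * poly g a"
  shows "(\<Sum>p\<in>{p. lens_map k c p = s}. magnification k c p) = 0"
proof (rule sum_magnification_eq_0_of_partial_fractions[OF assms(2-9)])
  fix p q assume "lens_map k c p = s" "\<not> P p" "lens_map k c q = s" "\<not> P q"
  moreover from this have "K * poly g a \<noteq> 0"
    using assms(1,10) by (auto simp: caustic_iff)
  ultimately show "K * poly g a * (1 / lens_det k c p + 1 / lens_det k c q) = -1"
    using assms(10) by (simp add: field_simps)
qed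

lemma sum_magnification_Fold:
  assumes "card {p. lens_map Fold (c1, c2, c3) p = s} = 2"
  shows "(\<Sum>p\<in>{p. lens_map Fold (c1, c2, c3) p = s}. magnification Fold (c1, c2, c3) p) = 0"
proof (rule sum_magnification_eq_0_of_elimination[where \<pi> = "\<lambda>p. p$2"
    and Q = "\<lambda>s. [:-s$2, 0, 1:]" and B = 1, OF assms])
  show "inj_on (\<lambda>p. p$2) {p. lens_map Fold (c1, c2, c3) p = s}"
    by (auto simp: inj_on_def vector_2_eq_iff)
qed (simp_all add: pderiv_pCons, algebra+)

lemma sum_magnification_Cusp:
  assumes "card {p. lens_map Cusp (c1, c2, c3) p = s} = 3"
  shows "(\<Sum>p\<in>{p. lens_map Cusp (c1, c2, c3) p = s}. magnification Cusp (c1, c2, c3) p) = 0"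
proof (rule sum_magnification_eq_0_of_elimination[where \<pi> = "\<lambda>p. p$2"
    and Q = "\<lambda>s. [:-s$2, s$1, 0, 1:]" and B = 1, OF assms])
  show "inj_on (\<lambda>p. p$2) {p. lens_map Cusp (c1, c2, c3) p = s}"
    by (auto simp: inj_on_def vector_2_eq_iff)
qed (simp_all add: pderiv_pCons, algebra+)

lemma sum_magnification_Swallowtail:
  assumes "card {p. lens_map Swallowtail (c1, c2, c3) p = s} = 4"
  shows "(\<Sum>p\<in>{p. lens_map Swallowtail (c1, c2, c3) p = s}. magnification Swallowtail (c1, c2, c3) p) = 0"
proof (rule sum_magnification_eq_0_of_elimination[where \<pi> = "\<lambda>p. p$1"
    and Q = "\<lambda>s. [:-s$1, s$2, c1, 0, 1:]" and B = 1, OF assms])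
  show "inj_on (\<lambda>p. p$1) {p. lens_map Swallowtail (c1, c2, c3) p = s}"
    by (auto simp: inj_on_def vector_2_eq_iff)
qed (simp_all add: pderiv_pCons, algebra+)

lemma sum_magnification_Butterfly:
  assumes "card {p. lens_map Butterfly (c1, c2, c3) p = s} = 5"
  shows "(\<Sum>p\<in>{p. lens_map Butterfly (c1, c2, c3) p = s}. magnification Butterfly (c1, c2, c3) p) = 0"
proof (rule sum_magnification_eq_0_of_elimination[where \<pi> = "\<lambda>p. p$1"
    and Q = "\<lambda>s. [:-s$1, -2 * s$2, -3 * c2, -4 * c1, 0, -6:]" and B = 1, OF assms])
  show "inj_on (\<lambda>p. p$1) {p. lens_map Butterfly (c1, c2, c3) p = s}"
    by (auto simp: inj_on_def vector_2_eq_iff)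
qed (simp_all add: pderiv_pCons, algebra+)

lemma sum_magnification_Wigwam:
  assumes "card {p. lens_map Wigwam (c1, c2, c3) p = s} = 6"
  shows "(\<Sum>p\<in>{p. lens_map Wigwam (c1, c2, c3) p = s}. magnification Wigwam (c1, c2, c3) p) = 0"
proof (rule sum_magnification_eq_0_of_elimination[where \<pi> = "\<lambda>p. p$1"
    and Q = "\<lambda>s. [:-s$1, -2 * s$2, -3 * c3, -4 * c2, -5 * c1, 0, -7:]" and B = 1, OF assms])
  show "inj_on (\<lambda>p. p$1) {p. lens_map Wigwam (c1, c2, c3) p = s}"
    by (auto simp: inj_on_def vector_2_eq_iff)
qed (simp_all add: pderiv_pCons, algebra+)

lemma sum_magnification_EllipticUmbilic:
  assumes "\<not> caustic EllipticUmbilic (c1, c2, c3) s"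
    and "card {p. lens_map EllipticUmbilic (c1, c2, c3) p = s} = 4"
  shows "(\<Sum>p\<in>{p. lens_map EllipticUmbilic (c1, c2, c3) p = s}. magnification EllipticUmbilic (c1, c2, c3) p) = 0"
proof (cases "s$2 = 0")
  case False
  have inj: "inj_on (\<lambda>p. p$1) {p. lens_map EllipticUmbilic (c1, c2, c3) p = s}"
    using False by (intro inj_on_vector_2_component[where a = "\<lambda>x. 6 * x - 2 * c1" and b = "\<lambda>_. s$2" and j = 2])
      (auto simp: algebra_simps)
  show ?thesis
    by (rule sum_magnification_eq_0_of_elimination[where \<pi> = "\<lambda>p. p$1" and B = "[:-2 * c1, 6:]"
          and Q = "\<lambda>s. [:3 * (s$2)^2 - 4 * c1^2 * s$1, 24 * c1 * s$1 - 8 * c1^3, 36 * c1^2 - 36 * s$1, 0, -108:]",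
          OF assms(2) _ _ inj])
      (simp_all add: pderiv_pCons, algebra+)
next
  case True
  show ?thesis
  proof (rule sum_magnification_eq_0_of_partial_fractions_constant[where P = "\<lambda>p. p$2 = 0" and \<pi> = "\<lambda>p. p$1"
        and g = "[:s$1, 2 * c1, 3:]" and a = "c1 / 3" and K = 6 and \<rho> = "\<lambda>p. p$2"
        and h = "[:-(s$1 + c1^2), 0, 3:]", OF assms(1)])
    show "inj_on (\<lambda>p. p$1) {p. lens_map EllipticUmbilic (c1, c2, c3) p = s \<and> p$2 = 0}"
      by (auto simp: inj_on_def vector_2_eq_iff)
    show "inj_on (\<lambda>p. p$2) {p. lens_map EllipticUmbilic (c1, c2, c3) p = s \<and> p$2 \<noteq> 0}"
      using True by (intro inj_on_vector_2_component[where a = "\<lambda>y. 6 * y" and b = "\<lambda>y. 2 * c1 * y" and j = 1])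
        (auto simp: vector_2_eq_iff algebra_simps)
  qed (use assms(2) True in \<open>auto simp: lens_map_eq_iff pderiv_pCons algebra_simps power2_eq_square\<close>)
qed

lemma sum_magnification_HyperbolicUmbilic:
  assumes "\<not> caustic HyperbolicUmbilic (c1, c2, c3) s"
    and "card {p. lens_map HyperbolicUmbilic (c1, c2, c3) p = s} = 4"
  shows "(\<Sum>p\<in>{p. lens_map HyperbolicUmbilic (c1, c2, c3) p = s}. magnification HyperbolicUmbilic (c1, c2, c3) p) = 0"
proof (cases "c1 = 0")
  case True
  show ?thesis
    by (rule sum_magnification_eq_0_of_reflection[where \<sigma> = "\<lambda>p. vec2 (- p$1) (p$2)", OF assms(1)])
      (use True in \<open>simp_all add: vector_2_eq_iff\<close>)
next
  case False
  have inj: "inj_on (\<lambda>p. p$1) {p. lens_map HyperbolicUmbilic (c1, c2, c3) p = s}"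
    using False by (intro inj_on_vector_2_component[where a = "\<lambda>_. c1" and b = "\<lambda>x. - 3 * x^2 - s$1" and j = 2])
      (auto simp: algebra_simps)
  show ?thesis
    by (rule sum_magnification_eq_0_of_elimination[where \<pi> = "\<lambda>p. p$1" and B = "[:c1:]"
          and Q = "\<lambda>s. [:-(c1^2 * s$2) - 3 * (s$1)^2, -(c1^3), -18 * s$1, 0, -27:]", OF assms(2) _ _ inj])
      (simp_all add: pderiv_pCons, algebra+)
qed

lemma sum_magnification_ParabolicUmbilic:
  assumes "\<not> caustic ParabolicUmbilic (c1, c2, c3) s"
    and "card {p. lens_map ParabolicUmbilic (c1, c2, c3) p = s} = 5"
  shows "(\<Sum>p\<in>{p. lens_map ParabolicUmbilic (c1, c2, c3) p = s}. magnification ParabolicUmbilic (c1, c2, c3) p) = 0"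
proof -
  have factor: "2 * (c1 + p$2) * p$1 = s$1" if "lens_map ParabolicUmbilic (c1, c2, c3) p = s" for p
    using that by (auto simp: vector_2_eq_iff algebra_simps)
  show ?thesis
  proof (cases "s$1 = 0")
    case True
    then have on_line: "p$2 = - c1" if "lens_map ParabolicUmbilic (c1, c2, c3) p = s" "p$1 \<noteq> 0" for p
      using factor[OF that(1)] that(2) by simp
    show ?thesis
    proof (rule sum_magnification_eq_0_of_partial_fractions_constant[where P = "\<lambda>p. p$1 = 0" and \<pi> = "\<lambda>p. p$2"
          and g = "[:- s$2, 2 * c2, 0, 4:]" and a = "- c1" and K = "-2" and \<rho> = "\<lambda>p. p$1"
          and h = "[:- (s$2 + 2 * c1 * c2 + 4 * c1^3), 0, 1:]", OF assms(1)])
      show "inj_on (\<lambda>p. p$2) {p. lens_map ParabolicUmbilic (c1, c2, c3) p = s \<and> p$1 = 0}"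
        by (auto simp: inj_on_def vector_2_eq_iff)
      show "inj_on (\<lambda>p. p$1) {p. lens_map ParabolicUmbilic (c1, c2, c3) p = s \<and> p$1 \<noteq> 0}"
      proof (rule inj_onI)
        fix p q
        assume "p \<in> {p. lens_map ParabolicUmbilic (c1, c2, c3) p = s \<and> p$1 \<noteq> 0}"
          and "q \<in> {p. lens_map ParabolicUmbilic (c1, c2, c3) p = s \<and> p$1 \<noteq> 0}" and "p$1 = q$1"
        moreover from this have "p$2 = q$2"
          using on_line by (metis (mono_tags, lifting) mem_Collect_eq)
        ultimately show "p = q"
          by (simp add: vector_2_eq_iff)
      qed
      show "poly [:- (s$2 + 2 * c1 * c2 + 4 * c1^3), 0, 1:] (p$1) = 0"
        and "lens_det ParabolicUmbilic (c1, c2, c3) p = - 2 * -2 * poly [:- s$2, 2 * c2, 0, 4:] (- c1)"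
        if "lens_map ParabolicUmbilic (c1, c2, c3) p = s" "p$1 \<noteq> 0" for p
        using that on_line[OF that] by (auto simp: lens_map_eq_iff algebra_simps power2_eq_square power3_eq_cube)
    qed (use assms(2) in \<open>auto simp: lens_map_eq_iff pderiv_pCons algebra_simps power2_eq_square power3_eq_cube power4_eq_xxxx\<close>)
  next
    case False
    have inj: "inj_on (\<lambda>p. p$2) {p. lens_map ParabolicUmbilic (c1, c2, c3) p = s}"
    proof (rule inj_on_vector_2_component[where a = "\<lambda>y. 2 * (c1 + y)" and b = "\<lambda>_. s$1" and j = 1])
      fix p assume "p \<in> {p. lens_map ParabolicUmbilic (c1, c2, c3) p = s}"
      then show "2 * (c1 + p$2) * p$1 = s$1"
        using factor by simp
      with False show "2 * (c1 + p$2) \<noteq> 0"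
        by auto
    qed simp
    show ?thesis
      by (rule sum_magnification_eq_0_of_elimination[where \<pi> = "\<lambda>p. p$2" and B = "[:2 * c1, 2:]"
            and Q = "\<lambda>s. [:(s$1)^2 - 4 * c1^2 * s$2, 8 * c1^2 * c2 - 8 * c1 * s$2, 16 * c1 * c2 - 4 * s$2,
                          16 * c1^2 + 8 * c2, 32 * c1, 16:]", OF assms(2) _ _ inj])
        (simp_all add: pderiv_pCons, algebra+)
  qed
qed

lemma sum_magnification_second_umbilic:
  assumes "k = EllipticUmbilic2 \<or> k = HyperbolicUmbilic2" and "\<not> caustic k (c1, c2, c3) s"
    and "card {p. lens_map k (c1, c2, c3) p = s} = 6"
  shows "(\<Sum>p\<in>{p. lens_map k (c1, c2, c3) p = s}. magnification k (c1, c2, c3) p) = 0"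
proof -
  define e where "e = (if k = EllipticUmbilic2 then 1 else -1 :: real)"
  then have "e \<noteq> 0"
    by simp
  have map: "lens_map k (c1, c2, c3) p =
      vec2 (- 2 * p$1 * p$2) (- ((p$1)^2) + 5 * e * (p$2)^4 - 4 * c1 * (p$2)^3 - 3 * c2 * (p$2)^2 - 2 * c3 * p$2)" for p
    using assms(1) by (auto simp: e_def vector_2_eq_iff)
  have det: "lens_det k (c1, c2, c3) p =
      - 4 * p$2 * (10 * e * (p$2)^3 - 6 * c1 * (p$2)^2 - 3 * c2 * p$2 - c3) - 4 * (p$1)^2" for p
    using assms(1) by (auto simp: e_def algebra_simps)
  have factor: "-2 * p$2 * p$1 = s$1" if "lens_map k (c1, c2, c3) p = s" for p
    using that by (auto simp: map vector_2_eq_iff algebra_simps)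
  show ?thesis
  proof (cases "s$1 = 0")
    case True
    then have on_axis: "p$2 = 0" if "lens_map k (c1, c2, c3) p = s" "p$1 \<noteq> 0" for p
      using factor[OF that(1)] that(2) by simp
    show ?thesis
    proof (rule sum_magnification_eq_0_of_partial_fractions_constant[where P = "\<lambda>p. p$1 = 0" and \<pi> = "\<lambda>p. p$2"
          and g = "[:- s$2, -2 * c3, -3 * c2, -4 * c1, 5 * e:]" and a = 0 and K = 2 and \<rho> = "\<lambda>p. p$1"
          and h = "[:s$2, 0, 1:]", OF assms(2)])
      show "inj_on (\<lambda>p. p$2) {p. lens_map k (c1, c2, c3) p = s \<and> p$1 = 0}"
        by (auto simp: inj_on_def vector_2_eq_iff)
      show "inj_on (\<lambda>p. p$1) {p. lens_map k (c1, c2, c3) p = s \<and> p$1 \<noteq> 0}"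
      proof (rule inj_onI)
        fix p q
        assume "p \<in> {p. lens_map k (c1, c2, c3) p = s \<and> p$1 \<noteq> 0}"
          and "q \<in> {p. lens_map k (c1, c2, c3) p = s \<and> p$1 \<noteq> 0}" and "p$1 = q$1"
        moreover from this have "p$2 = q$2"
          using on_axis by (metis (mono_tags, lifting) mem_Collect_eq)
        ultimately show "p = q"
          by (simp add: vector_2_eq_iff)
      qed
      show "poly [:s$2, 0, 1:] (p$1) = 0"
        and "lens_det k (c1, c2, c3) p = - 2 * 2 * poly [:- s$2, -2 * c3, -3 * c2, -4 * c1, 5 * e:] 0"
        if "lens_map k (c1, c2, c3) p = s" "p$1 \<noteq> 0" for p
        using that on_axis[OF that] by (auto simp: lens_map_eq_iff map det algebra_simps power2_eq_square)
    qed (use assms(3) \<open>e \<noteq> 0\<close> in \<open>auto simp: lens_map_eq_iff map det pderiv_pCons algebra_simps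
                                   power2_eq_square power3_eq_cube power4_eq_xxxx\<close>)
  next
    case False
    have inj: "inj_on (\<lambda>p. p$2) {p. lens_map k (c1, c2, c3) p = s}"
    proof (rule inj_on_vector_2_component[where a = "\<lambda>y. -2 * y" and b = "\<lambda>_. s$1" and j = 1])
      fix p assume "p \<in> {p. lens_map k (c1, c2, c3) p = s}"
      then show "-2 * p$2 * p$1 = s$1"
        using factor by simp
      with False show "-2 * p$2 \<noteq> 0"
        by auto
    qed simp
    show ?thesis
      by (rule sum_magnification_eq_0_of_elimination[where \<pi> = "\<lambda>p. p$2" and B = "[:0, -2:]"
            and Q = "\<lambda>s. [:-((s$1)^2), 0, -4 * s$2, -8 * c3, -12 * c2, -16 * c1, 20 * e:]", OF assms(3) _ _ inj])
        (use \<open>e \<noteq> 0\<close> in \<open>simp_all add: map det pderiv_pCons\<close>, algebra+)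
  qed
qed

lemma lens_map_SymbolicUmbilic_off_line:
  assumes "c2 = -2 * c1 * y0" "s$2 = -4 * y0^3 - 2 * c3 * y0"
    and "lens_map SymbolicUmbilic (c1, c2, c3) p = s" "p$2 \<noteq> y0"
  shows "c1 * p$1 = - (2 * ((p$2)^2 + p$2 * y0 + y0^2) + c3)"
proof -
  have "- 4 * (p$2)^3 - 2 * c1 * p$1 * p$2 - c2 * p$1 - 2 * c3 * p$2 = s$2"
    using assms(3) by (auto simp: vector_2_eq_iff)
  then have "(p$2 - y0) * (c1 * p$1 + 2 * ((p$2)^2 + p$2 * y0 + y0^2) + c3) = 0"
    using assms(1,2) by algebra
  then show ?thesis
    using assms(4) by (simp add: eq_neg_iff_add_eq_0 add.assoc)
qed

lemma cancel_partial_fraction_pair: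
  fixes c u D1 D2 :: real
  assumes "c \<noteq> 0" "u \<noteq> 0" "D1 \<noteq> 0" "D2 \<noteq> 0" "D1 - D2 = 2 * c * u"
  shows "-2 / c * (-3 * D2 * D1) * (1 / (12 * u * D1) + 1 / (-12 * u * D2)) = -1"
proof -
  have "1 / (12 * u * D1) + 1 / (-12 * u * D2) = - (D1 - D2) / (12 * u * D1 * D2)"
    using assms(2-4) by (simp add: field_simps)
  then have "-2 / c * (-3 * D2 * D1) * (1 / (12 * u * D1) + 1 / (-12 * u * D2))
      = -2 / c * (-3 * D2 * D1) * (- (2 * c * u) / (12 * u * D1 * D2))"
    by (simp only: assms(5))
  also have "\<dots> = -1"
    using assms(1-4) by (simp add: field_simps)
  finally show ?thesis .
qed

lemma sum_magnification_SymbolicUmbilic_degenerate: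
  assumes "\<not> caustic SymbolicUmbilic (c1, c2, c3) s"
    and "card {p. lens_map SymbolicUmbilic (c1, c2, c3) p = s} = 6"
    and "c1 \<noteq> 0" "lens_map SymbolicUmbilic (c1, c2, c3) p0 = s" "2 * c1 * p0$2 + c2 = 0"
  shows "(\<Sum>p\<in>{p. lens_map SymbolicUmbilic (c1, c2, c3) p = s}. magnification SymbolicUmbilic (c1, c2, c3) p) = 0"
proof -
  define y0 where "y0 = p0$2"
  define w where "w y = 2 * (y^2 + y * y0 + y0^2) + c3" for y
  \<comment> \<open>Off the line \<open>y = y0\<close>, the second coordinate gives \<open>c1 x = - w y\<close>; eliminating \<open>x\<close>
    from the first coordinate then yields \<open>g\<close>.\<close>
  define g where "g = [:- (c1^2 * s$1) - 12 * c3 * y0^2 - 3 * c3^2 - 12 * y0^4,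
                       2 * c1^3 * y0 - 12 * c3 * y0 - 24 * y0^3, - (c1^3) - 12 * c3 - 36 * y0^2, -24 * y0, -12:]"
  have c2: "c2 = -2 * c1 * y0"
    using assms(5) by (simp add: y0_def)
  have "s$2 = -4 * y0^3 - 2 * c3 * y0"
    using assms(4) unfolding c2 y0_def by (auto simp: vector_2_eq_iff algebra_simps power3_eq_cube)
  with c2 have off_line: "c1 * p$1 = - w (p$2)"
    if "lens_map SymbolicUmbilic (c1, c2, c3) p = s" "p$2 \<noteq> y0" for p
    using that unfolding w_def by (rule lens_map_SymbolicUmbilic_off_line)
  have poly_g: "poly g y = -3 * (w y)^2 - c1^2 * (c1 * y^2 - 2 * c1 * y0 * y + s$1)" for y
    unfolding g_def w_def by simp algebra
  have s1: "- 3 * (p$1)^2 - c1 * (p$2)^2 - c2 * p$2 = s$1" if "lens_map SymbolicUmbilic (c1, c2, c3) p = s" for p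
    using that by (auto simp: vector_2_eq_iff)
  show ?thesis
  proof (rule sum_magnification_eq_0_of_partial_fractions[where P = "\<lambda>p. p$2 \<noteq> y0" and \<pi> = "\<lambda>p. p$2"
        and g = g and a = y0 and K = "-2 / c1" and \<rho> = "\<lambda>p. p$1" and h = "[:s$1 - c1 * y0^2, 0, 3:]"])
    show "card {p. lens_map SymbolicUmbilic (c1, c2, c3) p = s} = degree g + 2"
      using assms(2) by (simp add: g_def)
    show "inj_on (\<lambda>p. p$2) {p. lens_map SymbolicUmbilic (c1, c2, c3) p = s \<and> p$2 \<noteq> y0}"
      using off_line assms(3)
      by (intro inj_on_vector_2_component[where a = "\<lambda>_. c1" and b = "\<lambda>y. - w y" and j = 1]) auto
    show "inj_on (\<lambda>p. p$1) {p. lens_map SymbolicUmbilic (c1, c2, c3) p = s \<and> \<not> p$2 \<noteq> y0}"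
      by (auto simp: inj_on_def vector_2_eq_iff)
  next
    fix p assume p: "lens_map SymbolicUmbilic (c1, c2, c3) p = s" "p$2 \<noteq> y0"
    show "poly g (p$2) = 0"
      using poly_g[of "p$2"] off_line[OF p] s1[OF p(1)] unfolding c2 by algebra
    have "c1 * lens_det SymbolicUmbilic (c1, c2, c3) p = -2 * (y0 - p$2) * poly (pderiv g) (p$2)"
      using off_line[OF p] unfolding c2 w_def g_def by (simp add: pderiv_pCons) algebra
    then show "lens_det SymbolicUmbilic (c1, c2, c3) p = -2 / c1 * (y0 - p$2) * poly (pderiv g) (p$2)"
      using assms(3) by (simp add: field_simps)
  next
    fix p assume "lens_map SymbolicUmbilic (c1, c2, c3) p = s" "\<not> p$2 \<noteq> y0"
    then show "poly [:s$1 - c1 * y0^2, 0, 3:] (p$1) = 0"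
      using s1 unfolding c2 by (auto simp: algebra_simps power2_eq_square)
  next
    fix p q
    assume p: "lens_map SymbolicUmbilic (c1, c2, c3) p = s" "\<not> p$2 \<noteq> y0"
      and q: "lens_map SymbolicUmbilic (c1, c2, c3) q = s" "\<not> q$2 \<noteq> y0" and "p \<noteq> q"
    define u where "u = p$1"
    have "(p$1 - q$1) * (p$1 + q$1) = 0"
      using s1[OF p(1)] s1[OF q(1)] p(2) q(2) by (simp add: algebra_simps power2_eq_square)
    moreover have "p$1 \<noteq> q$1"
      using \<open>p \<noteq> q\<close> p(2) q(2) by (auto simp: vector_2_eq_iff)
    ultimately have q1: "q$1 = - u"
      by (simp add: u_def eq_neg_iff_add_eq_0 add.commute)
    have det_p: "lens_det SymbolicUmbilic (c1, c2, c3) p = 12 * u * (w y0 + c1 * u)"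
      using p(2) unfolding u_def w_def c2 by (simp add: algebra_simps power2_eq_square)
    have det_q: "lens_det SymbolicUmbilic (c1, c2, c3) q = - 12 * u * (w y0 - c1 * u)"
      using q(2) q1 unfolding w_def c2 by (simp add: algebra_simps power2_eq_square)
    have g_y0: "poly g y0 = - 3 * (w y0 - c1 * u) * (w y0 + c1 * u)"
      using poly_g[of y0] s1[OF p(1)] p(2) unfolding u_def c2 by algebra
    have "u \<noteq> 0" "w y0 + c1 * u \<noteq> 0" "w y0 - c1 * u \<noteq> 0"
      using assms(1) p(1) q(1) det_p det_q by (auto simp: caustic_iff)
    then show "-2 / c1 * poly g y0 * (1 / lens_det SymbolicUmbilic (c1, c2, c3) p
        + 1 / lens_det SymbolicUmbilic (c1, c2, c3) q) = -1"
      unfolding det_p det_q g_y0 using assms(3) by (intro cancel_partial_fraction_pair) simp_all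
  qed (simp_all add: g_def)
qed

lemma sum_magnification_SymbolicUmbilic:
  assumes "\<not> caustic SymbolicUmbilic (c1, c2, c3) s"
    and "card {p. lens_map SymbolicUmbilic (c1, c2, c3) p = s} = 6"
  shows "(\<Sum>p\<in>{p. lens_map SymbolicUmbilic (c1, c2, c3) p = s}. magnification SymbolicUmbilic (c1, c2, c3) p) = 0"
proof (cases "\<exists>p0. lens_map SymbolicUmbilic (c1, c2, c3) p0 = s \<and> 2 * c1 * p0$2 + c2 = 0")
  case True
  then obtain p0 where p0: "lens_map SymbolicUmbilic (c1, c2, c3) p0 = s" "2 * c1 * p0$2 + c2 = 0"
    by blast
  show ?thesis
  proof (cases "c1 = 0")
    case True
    with p0(2) have "c2 = 0"
      by simp
    with True show ?thesis
      by (intro sum_magnification_eq_0_of_reflection[where \<sigma> = "\<lambda>p. vec2 (- p$1) (p$2)", OF assms(1)])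
        (simp_all add: vector_2_eq_iff)
  next
    case False
    show ?thesis
      by (rule sum_magnification_SymbolicUmbilic_degenerate[OF assms False p0])
  qed
next
  case False
  have inj: "inj_on (\<lambda>p. p$2) {p. lens_map SymbolicUmbilic (c1, c2, c3) p = s}"
    using False by (intro inj_on_vector_2_component[where a = "\<lambda>y. 2 * c1 * y + c2"
        and b = "\<lambda>y. - 4 * y^3 - 2 * c3 * y - s$2" and j = 1]) (auto simp: vector_2_eq_iff algebra_simps)
  show ?thesis
    by (rule sum_magnification_eq_0_of_elimination[where \<pi> = "\<lambda>p. p$2" and B = "[:c2, 2 * c1:]"
          and Q = "\<lambda>s. [:- (c2^2 * s$1) - 3 * (s$2)^2, - 4 * c1 * c2 * s$1 - c2^3 - 12 * c3 * s$2,
                        - 5 * c1 * c2^2 - 4 * c1^2 * s$1 - 12 * c3^2, - 8 * c1^2 * c2 - 24 * s$2,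
                        - 4 * c1^3 - 48 * c3, 0, -48:]", OF assms(2) _ _ inj])
      (simp_all add: pderiv_pCons, algebra+)
qed

theorem theorem1:
  fixes k :: catastrophe and c :: "real \<times> real \<times> real" and s :: "real^2"
  assumes "\<not> caustic k c s"
    and "card {p. lens_map k c p = s} = max_images k"
  shows "(\<Sum>p\<in>{p. lens_map k c p = s}. magnification k c p) = 0"
proof -
  obtain c1 c2 c3 where c: "c = (c1, c2, c3)"
    by (cases c) auto
  show ?thesis
    using assms unfolding c
    by (cases k) (simp_all only: max_images.simps not_False_eq_True simp_thms
        sum_magnification_Fold sum_magnification_Cusp sum_magnification_Swallowtail
        sum_magnification_EllipticUmbilic sum_magnification_HyperbolicUmbilic sum_magnification_Butterfly
        sum_magnification_ParabolicUmbilic sum_magnification_Wigwam sum_magnification_SymbolicUmbilic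
        sum_magnification_second_umbilic)
qed

end
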